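(* Let $P$ be a path linkage with $k\ge2$ edges, all of positive length. Let $p\in M(P)$ and let $\alpha:[0,1]\to[P]$ be continuous with $\alpha(0)=\theta(p)$. Then there exists a continuous $\tilde\alpha:[0,1]\to M(P)$ with $\tilde\alpha(0)=p$ and $\theta\circ\tilde\alpha=\alpha$.
   Context: A path linkage is a linkage $P=(G,l)$ where $G$ is a path graph with vertices $1,\dots,k+1$ and edges $\{i,i+1\}$; its terminal vertices are $s=1$, $t=k+1$. $C(P)=\{p:V\to\mathbb R^2:|p(u)-p(v)|=l(\{u,v\})\text{ for every edge}\}$, and $M(P)$ is the quotient of $C(P)$ by the group of orientation preserving isometries of $\mathbb R^2$, with the quotient topology. $\theta:M(P)\to\mathbb R$, $\theta(p)=|p(s)-p(t)|$, and $[P]=\theta(M(P))$. *)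

theory Defs
  imports "HOL-Analysis.Analysis"
begin

text \<open>The plane R^2 is modelled by the complex numbers. A path linkage with k edges
  has vertices 1..k+1 and edge lengths l i for the edge {i, i+1}, i = 1..k.\<close>

definition quot_topology :: "'a topology \<Rightarrow> ('a \<Rightarrow> 'b) \<Rightarrow> 'b topology" where
  "quot_topology X f =
     topology (\<lambda>U. U \<subseteq> f ` topspace X \<and> openin X {x \<in> topspace X. f x \<in> U})"

lemma istopology_quot:
  "istopology (\<lambda>U. U \<subseteq> f ` topspace X \<and> openin X {x \<in> topspace X. f x \<in> U})"
  unfolding istopology_def
proof (rule conjI; intro allI impI)
  fix S T assume a: "S \<subseteq> f ` topspace X \<and> openin X {x \<in> topspace X. f x \<in> S}"
    "T \<subseteq> f ` topspace X \<and> openin X {x \<in> topspace X. f x \<in> T}"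
  have "{x \<in> topspace X. f x \<in> S \<inter> T} = {x \<in> topspace X. f x \<in> S} \<inter> {x \<in> topspace X. f x \<in> T}"
    by auto
  then show "S \<inter> T \<subseteq> f ` topspace X \<and> openin X {x \<in> topspace X. f x \<in> S \<inter> T}"
    using a by auto
next
  fix K assume a: "\<forall>S\<in>K. S \<subseteq> f ` topspace X \<and> openin X {x \<in> topspace X. f x \<in> S}"
  have "{x \<in> topspace X. f x \<in> \<Union>K} = (\<Union>S\<in>K. {x \<in> topspace X. f x \<in> S})" by auto
  moreover have "openin X (\<Union>S\<in>K. {x \<in> topspace X. f x \<in> S})" using a by auto
  ultimately show "\<Union>K \<subseteq> f ` topspace X \<and> openin X {x \<in> topspace X. f x \<in> \<Union>K}"
    using a by auto
qed

lemma openin_quot_topology: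
  "openin (quot_topology X f) U \<longleftrightarrow> U \<subseteq> f ` topspace X \<and> openin X {x \<in> topspace X. f x \<in> U}"
  unfolding quot_topology_def topology_inverse'[OF istopology_quot] by simp

definition orient_isometries :: "(complex \<Rightarrow> complex) set" where
  "orient_isometries = {g. \<exists>u b. cmod u = 1 \<and> g = (\<lambda>z. u * z + b)}"

definition path_conf :: "nat \<Rightarrow> (nat \<Rightarrow> real) \<Rightarrow> (nat \<Rightarrow> complex) set" where
  "path_conf k l = {p \<in> PiE {1..Suc k} (\<lambda>_. UNIV).
      \<forall>i\<in>{1..k}. cmod (p (Suc i) - p i) = l i}"

definition path_conf_top :: "nat \<Rightarrow> (nat \<Rightarrow> real) \<Rightarrow> (nat \<Rightarrow> complex) topology" where
  "path_conf_top k l = subtopology (product_topology (\<lambda>_. euclidean) {1..Suc k}) (path_conf k l)"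

definition conf_orbit :: "nat \<Rightarrow> (nat \<Rightarrow> complex) \<Rightarrow> (nat \<Rightarrow> complex) set" where
  "conf_orbit k p = {restrict (g \<circ> p) {1..Suc k} | g. g \<in> orient_isometries}"

definition moduli_top :: "nat \<Rightarrow> (nat \<Rightarrow> real) \<Rightarrow> (nat \<Rightarrow> complex) set topology" where
  "moduli_top k l = quot_topology (path_conf_top k l) (conf_orbit k)"

definition moduli :: "nat \<Rightarrow> (nat \<Rightarrow> real) \<Rightarrow> (nat \<Rightarrow> complex) set set" where
  "moduli k l = conf_orbit k ` path_conf k l"

text \<open>theta: distance between terminal vertices s = 1 and t = k+1 (well defined on orbits).\<close>
definition theta :: "nat \<Rightarrow> (nat \<Rightarrow> complex) set \<Rightarrow> real" where
  "theta k c = (let q = (SOME q. q \<in> c) in cmod (q 1 - q (Suc k)))"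

lemma topspace_quot_topology: "topspace (quot_topology X f) = f ` topspace X"
proof (rule antisym)
  have "{x \<in> topspace X. f x \<in> f ` topspace X} = topspace X" by blast
  then have "openin (quot_topology X f) (f ` topspace X)"
    unfolding openin_quot_topology by simp
  then show "f ` topspace X \<subseteq> topspace (quot_topology X f)" by (rule openin_subset)
  have "openin (quot_topology X f) (topspace (quot_topology X f))" by (rule openin_topspace)
  then show "topspace (quot_topology X f) \<subseteq> f ` topspace X"
    unfolding openin_quot_topology by (rule conjunct1)
qed

lemma topspace_moduli_top: "topspace (moduli_top k l) = moduli k l"
proof -
  have "topspace (path_conf_top k l) = path_conf k l"
    unfolding path_conf_top_def path_conf_def by auto
  then show ?thesis
    by (simp add: moduli_top_def moduli_def topspace_quot_topology)
qed

end

theory Submission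
  imports Defs
begin

(* Writing the edges of a configuration c as vectors w i = c (i+1) - c i, theta is the norm
   of the sum of the w i, and a configuration is determined up to translation by its edge
   vectors. The theorem therefore reduces to lifting a path a(t) in the range of |w 1 + ... + w k|
   to continuous edge vectors of prescribed lengths:

   Split off one link i whose removal leaves
     a nonzero remaining sum, clamp the target length of the remaining chain continuously into
     the admissible window, lift it by induction and close the triangle with elbow_lift;
   - finally, chain_conf turns edge vectors back into configurations, continuously, and the
     quotient map to M(P) is continuous, which yields the lift of alpha. *)

definition reach_max :: "(nat \<Rightarrow> real) \<Rightarrow> nat set \<Rightarrow> real" where
  "reach_max l I = (\<Sum>i\<in>I. l i)"

definition reach_min :: "(nat \<Rightarrow> real) \<Rightarrow> nat set \<Rightarrow> real" where
  "reach_min l I = max 0 (2 * Max (l ` I) - reach_max l I)"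

lemma reach_bounds:
  fixes w :: "nat \<Rightarrow> complex"
  assumes "finite I" "I \<noteq> {}" "\<forall>i\<in>I. cmod (w i) = l i"
  shows "reach_min l I \<le> cmod (\<Sum>i\<in>I. w i) \<and> cmod (\<Sum>i\<in>I. w i) \<le> reach_max l I"
proof
  have "cmod (\<Sum>i\<in>I. w i) \<le> (\<Sum>i\<in>I. cmod (w i))" by (rule norm_sum)
  then show "cmod (\<Sum>i\<in>I. w i) \<le> reach_max l I"
    using assms(3) by (simp add: reach_max_def)
  have "Max (l ` I) \<in> l ` I" using assms(1,2) by (intro Max_in) auto
  then obtain j where j: "j \<in> I" "l j = Max (l ` I)" by (metis imageE)
  have rest: "cmod (\<Sum>i\<in>I-{j}. w i) \<le> (\<Sum>i\<in>I-{j}. l i)"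
    using norm_sum[of w "I - {j}"] assms(3) by simp
  have "cmod (w j) - cmod (\<Sum>i\<in>I-{j}. w i) \<le> cmod (\<Sum>i\<in>I. w i)"
    unfolding sum.remove[OF assms(1) j(1), of w] by (rule norm_diff_ineq)
  moreover have "reach_max l I = l j + (\<Sum>i\<in>I-{j}. l i)"
    unfolding reach_max_def by (rule sum.remove[OF assms(1) j(1)])
  ultimately show "reach_min l I \<le> cmod (\<Sum>i\<in>I. w i)"
    using rest j assms(3) unfolding reach_min_def by auto
qed

lemma cmod_real_add_cis_sq:
  "(cmod (of_real b + of_real r * cis x))\<^sup>2 = b\<^sup>2 + r\<^sup>2 + 2 * b * r * cos x"
proof -
  have "(cmod (of_real b + of_real r * cis x))\<^sup>2 = (b + r * cos x)\<^sup>2 + (r * sin x)\<^sup>2"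
    by (simp add: cmod_power2)
  also have "\<dots> = b\<^sup>2 + r\<^sup>2 + 2 * b * r * cos x"
  proof -
    have sin_sq: "sin x * sin x = 1 - cos x * cos x"
      using sin_squared_eq[of x] by (simp add: power2_eq_square)
    show ?thesis by (simp add: power2_eq_square algebra_simps sin_sq)
  qed
  finally show ?thesis .
qed

lemma cmod_add_sq: "(cmod (w + v))\<^sup>2 = (cmod w)\<^sup>2 + (cmod v)\<^sup>2 + 2 * Re (w * cnj v)"
  unfolding cmod_power2 by (simp add: power2_eq_square algebra_simps)

lemma unit_eq_cis_arccos:
  assumes "cmod z = 1"
  shows "z = cis ((if Im z \<ge> 0 then 1 else -1) * arccos (Re z))"
proof -
  have "(Re z)\<^sup>2 + (Im z)\<^sup>2 = 1" using assms by (simp add: cmod_def)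
  then have "sqrt (1 - (Re z)\<^sup>2) = \<bar>Im z\<bar>" by (metis add_diff_cancel_left' real_sqrt_abs)
  moreover have "-1 \<le> Re z" "Re z \<le> 1" using abs_Re_le_cmod[of z] assms by auto
  ultimately show ?thesis by (intro complex_eqI) (auto simp: sin_arccos)
qed

(* Two-link lifting: if B moves continuously, B never vanishes and a triangle with sides |B|, r
   and a exists at all times, then a second link u of length r, starting at w, can follow so
   that |u + B| = a; u is B rotated by the angle given by the law of cosines. *)
lemma elbow_lift:
  fixes B :: "real \<Rightarrow> complex" and a :: "real \<Rightarrow> real"
  assumes contB: "continuous_on S B" and conta: "continuous_on S a" and r: "r > 0"
    and range: "\<forall>t\<in>S. 0 < cmod (B t) \<and> \<bar>cmod (B t) - r\<bar> \<le> a t \<and> a t \<le> cmod (B t) + r"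
    and t0: "t0 \<in> S" and w: "cmod w = r" "cmod (w + B t0) = a t0"
  obtains u where "continuous_on S u" "\<forall>t\<in>S. cmod (u t) = r \<and> cmod (u t + B t) = a t"
    "u t0 = w"
proof -
  define b where "b t = cmod (B t)" for t
  define c where "c t = ((a t)\<^sup>2 - (b t)\<^sup>2 - r\<^sup>2) / (2 * b t * r)" for t
  have b_pos: "b t > 0" if "t \<in> S" for t using range that unfolding b_def by blast
  have a_nonneg: "a t \<ge> 0" if "t \<in> S" for t using range that by force
  have c_range: "-1 \<le> c t \<and> c t \<le> 1" if t: "t \<in> S" for t
  proof -
    have "(b t - r)\<^sup>2 \<le> (a t)\<^sup>2" "(a t)\<^sup>2 \<le> (b t + r)\<^sup>2"
      using range t a_nonneg[OF t] abs_le_square_iff[of "b t - r" "a t"]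
      unfolding b_def by (auto intro: power_mono)
    then show ?thesis unfolding c_def using b_pos[OF t] r
      by (simp add: divide_le_eq le_divide_eq power2_eq_square algebra_simps)
  qed
  (* The initial position of w relative to B t0 fixes the side (sigma) to which the elbow bends. *)
  define z where "z = w * cnj (B t0) / of_real (r * b t0)"
  define \<sigma> where "\<sigma> = (if Im z \<ge> 0 then 1 else -1 :: real)"
  have cos_c: "cos (\<sigma> * arccos (c t)) = c t" if "t \<in> S" for t
    using c_range[OF that] by (simp add: \<sigma>_def)
  define u where "u t = of_real r * (B t / of_real (b t)) * cis (\<sigma> * arccos (c t))" for t
  have z_unit: "cmod z = 1"
    unfolding z_def using w r b_pos[OF t0] by (simp add: norm_divide norm_mult b_def)
  have "Re z = c t0"
    using cmod_add_sq[of w "B t0"] w b_pos[OF t0] r unfolding z_def c_def b_def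
    by (simp add: field_simps)
  then have z_cis: "cis (\<sigma> * arccos (c t0)) = z" using unit_eq_cis_arccos[OF z_unit] \<sigma>_def by simp
  have "B t0 * cnj (B t0) = of_real ((b t0)\<^sup>2)" unfolding b_def by (rule complex_norm_square[symmetric])
  then have u_init: "u t0 = w" unfolding u_def z_cis unfolding z_def using b_pos[OF t0] r
    by (simp add: field_simps power2_eq_square)
  have u_cont: "continuous_on S u"
    using b_pos c_range r unfolding u_def c_def b_def
    by (intro continuous_intros contB conta continuous_on_arccos') auto
  have u_elbow: "\<forall>t\<in>S. cmod (u t) = r \<and> cmod (u t + B t) = a t"
  proof
    fix t assume t: "t \<in> S"
    have "B t = of_real (b t) * (B t / of_real (b t))" using b_pos[OF t] by simp
    then have "u t + B t = (B t / of_real (b t)) * (of_real (b t) + of_real r * cis (\<sigma> * arccos (c t)))"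
      unfolding u_def by (simp add: algebra_simps)
    then have "cmod (u t + B t) = cmod (of_real (b t) + of_real r * cis (\<sigma> * arccos (c t)))"
      using b_pos[OF t] by (simp add: norm_mult norm_divide b_def)
    moreover have "(cmod (of_real (b t) + of_real r * cis (\<sigma> * arccos (c t))))\<^sup>2 = (a t)\<^sup>2"
      unfolding cmod_real_add_cis_sq cos_c[OF t] using b_pos[OF t] r
      by (simp add: c_def field_simps)
    ultimately have "cmod (u t + B t) = a t"
      using a_nonneg[OF t] by (metis norm_ge_zero power2_eq_iff_nonneg)
    moreover have "cmod (u t) = r"
      unfolding u_def using b_pos[OF t] r by (simp add: norm_mult norm_divide b_def)
    ultimately show "cmod (u t) = r \<and> cmod (u t + B t) = a t" by simp
  qed
  from that[OF u_cont u_elbow u_init] show thesis .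
qed

(* In a sum of at least two nonzero vectors some link can be removed without the remaining
   sum vanishing; this keeps the remaining chain off the singular position |B| = 0. *)
lemma exists_proper_subsum_nonzero:
  fixes w :: "nat \<Rightarrow> 'a::real_vector"
  assumes "finite I" "card I \<ge> 2" "\<forall>i\<in>I. w i \<noteq> 0"
  shows "\<exists>i\<in>I. (\<Sum>j\<in>I-{i}. w j) \<noteq> 0"
proof (rule ccontr)
  assume "\<not> ?thesis"
  then have all_eq: "w i = (\<Sum>j\<in>I. w j)" if "i \<in> I" for i
    using sum.remove[OF assms(1) that, of w] that by auto
  define V where "V = (\<Sum>j\<in>I. w j)"
  have "(\<Sum>j\<in>I. V) = V" unfolding V_def using all_eq by (intro sum.cong) auto
  then have "real (card I) *\<^sub>R V = V" using sum_constant_scaleR[of V I] by simp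
  then have "(real (card I) - 1) *\<^sub>R V = 0" by (simp add: scaleR_diff_left)
  then have "V = 0" using assms(2) by simp
  moreover obtain i where "i \<in> I" using assms(2) by fastforce
  ultimately show False using all_eq assms(3) V_def by auto
qed

lemma continuous_clamp:
  fixes lo hi :: "real \<Rightarrow> real"
  assumes "continuous_on S lo" "continuous_on S hi" "\<forall>t\<in>S. lo t \<le> hi t"
    and "t0 \<in> S" "lo t0 \<le> c" "c \<le> hi t0"
  obtains b where "continuous_on S b" "\<forall>t\<in>S. lo t \<le> b t \<and> b t \<le> hi t \<and> min (hi t) c \<le> b t"
    "b t0 = c"
proof
  show "continuous_on S (\<lambda>t. max (lo t) (min (hi t) c))"
    by (intro continuous_intros assms(1,2))
qed (use assms(3-6) in auto)

lemma reach_insert_feasible: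
  assumes "finite J" "J \<noteq> {}" "\<forall>j\<in>J. l j > 0" "i \<notin> J" "l i > 0"
    and "reach_min l (insert i J) \<le> a" "a \<le> reach_max l (insert i J)"
  shows "max (reach_min l J) \<bar>a - l i\<bar> \<le> min (reach_max l J) (a + l i)"
    and "0 < min (reach_max l J) (a + l i)"
proof -
  define M where "M = Max (l ` J)"
  define L where "L = reach_max l J"
  have L_pos: "L > 0" unfolding L_def reach_max_def using assms(1-3) by (simp add: sum_pos)
  have "M \<in> l ` J" unfolding M_def using assms(1,2) by (intro Max_in) auto
  then obtain j where "j \<in> J" "M = l j" by blast
  then have M_le_L: "M \<le> L" unfolding L_def reach_max_def
    using member_le_sum[of j J l] assms(1,3) by (simp add: less_imp_le)
  have max_ins: "Max (l ` insert i J) = max (l i) M" unfolding M_def using assms(1,2) by simp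
  have sum_ins: "reach_max l (insert i J) = l i + L" unfolding L_def reach_max_def using assms(1,4) by simp
  have "0 \<le> a" "2 * max (l i) M - (l i + L) \<le> a" "a \<le> l i + L"
    using assms(6,7) unfolding reach_min_def max_ins sum_ins by auto
  then show "max (reach_min l J) \<bar>a - l i\<bar> \<le> min (reach_max l J) (a + l i)"
    and "0 < min (reach_max l J) (a + l i)"
    using M_le_L L_pos assms(5) max.cobounded1[of "l i" M] max.cobounded2[of M "l i"]
    unfolding reach_min_def M_def[symmetric] L_def[symmetric] by (auto simp: abs_le_iff)
qed

(* Choice of the target length b(t) of the remaining chain J in the induction step: it starts at
   the current length, stays reachable by J and, together with l i, admits a triangle with
   side a(t); it also stays positive, so the remaining chain never passes through |B| = 0. *)
lemma sub_chain_target: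
  fixes a :: "real \<Rightarrow> real" and v :: complex and w :: "nat \<Rightarrow> complex"
  assumes "finite J" "J \<noteq> {}" "\<forall>j\<in>J. l j > 0" "i \<notin> J" "l i > 0"
    and "continuous_on S a" "t0 \<in> S"
    and "\<forall>t\<in>S. reach_min l (insert i J) \<le> a t \<and> a t \<le> reach_max l (insert i J)"
    and "cmod v = l i" "\<forall>j\<in>J. cmod (w j) = l j" "(\<Sum>j\<in>J. w j) \<noteq> 0"
    and "a t0 = cmod (v + (\<Sum>j\<in>J. w j))"
  obtains b where "continuous_on S b" "b t0 = cmod (\<Sum>j\<in>J. w j)"
    "\<forall>t\<in>S. 0 < b t \<and> reach_min l J \<le> b t \<and> b t \<le> reach_max l J
       \<and> \<bar>b t - l i\<bar> \<le> a t \<and> a t \<le> b t + l i"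
proof -
  define lo where "lo t = max (reach_min l J) \<bar>a t - l i\<bar>" for t
  define hi where "hi t = min (reach_max l J) (a t + l i)" for t
  define b0 where "b0 = cmod (\<Sum>j\<in>J. w j)"
  have b0_pos: "b0 > 0" using assms(11) unfolding b0_def by simp
  have lo_hi: "\<forall>t\<in>S. lo t \<le> hi t \<and> 0 < hi t"
    using reach_insert_feasible[OF assms(1-5)] assms(8) unfolding lo_def hi_def by blast
  have "\<bar>a t0 - l i\<bar> \<le> b0" "b0 \<le> a t0 + l i"
    using norm_triangle_ineq3[of "v + (\<Sum>j\<in>J. w j)" v] norm_triangle_ineq4[of "v + (\<Sum>j\<in>J. w j)" v]
    unfolding assms(12) b0_def assms(9) by simp_all
  moreover have "reach_min l J \<le> b0 \<and> b0 \<le> reach_max l J"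
    unfolding b0_def using reach_bounds[OF assms(1,2,10)] .
  ultimately have b0_range: "lo t0 \<le> b0" "b0 \<le> hi t0" unfolding lo_def hi_def by auto
  have "continuous_on S lo" "continuous_on S hi"
    unfolding lo_def hi_def by (intro continuous_intros assms(6))+
  then obtain b where b: "continuous_on S b"
    "\<forall>t\<in>S. lo t \<le> b t \<and> b t \<le> hi t \<and> min (hi t) b0 \<le> b t" "b t0 = b0"
    using continuous_clamp lo_hi assms(7) b0_range by blast
  have "0 < b t" if "t \<in> S" for t
  proof -
    have "0 < min (hi t) b0" using lo_hi that b0_pos by simp
    then show ?thesis using b(2) that by fastforce
  qed
  then have "\<forall>t\<in>S. 0 < b t \<and> reach_min l J \<le> b t \<and> b t \<le> reach_max l J
       \<and> \<bar>b t - l i\<bar> \<le> a t \<and> a t \<le> b t + l i"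
    using b(2) unfolding lo_def hi_def by (auto simp: abs_le_iff)
  with b(1,3) that show thesis unfolding b0_def by blast
qed

lemma chain_lift:
  fixes w0 :: "nat \<Rightarrow> complex" and a :: "real \<Rightarrow> real"
  assumes "finite I" "I \<noteq> {}" "\<forall>i\<in>I. l i > 0" "\<forall>i\<in>I. cmod (w0 i) = l i"
    and "continuous_on S a" "t0 \<in> S" "\<forall>t\<in>S. reach_min l I \<le> a t \<and> a t \<le> reach_max l I"
    and "a t0 = cmod (\<Sum>i\<in>I. w0 i)"
  shows "\<exists>W. (\<forall>i\<in>I. continuous_on S (\<lambda>t. W t i)) \<and> (\<forall>t\<in>S. \<forall>i\<in>I. cmod (W t i) = l i)
           \<and> (\<forall>i\<in>I. W t0 i = w0 i) \<and> (\<forall>t\<in>S. cmod (\<Sum>i\<in>I. W t i) = a t)"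
  using assms
proof (induction "card I" arbitrary: I w0 a rule: less_induct)
  case less
  show ?case
  proof (cases "card I \<ge> 2")
    case False
    moreover have "card I > 0" using less.prems(1,2) by (simp add: card_gt_0_iff)
    ultimately have "card I = 1" by linarith
    then obtain i where single: "I = {i}" by (rule card_1_singletonE)
    then have "\<forall>t\<in>S. a t = l i" using less.prems(3,7) by (auto simp: reach_min_def reach_max_def)
    then show ?thesis using less.prems(4) single by (intro exI[of _ "\<lambda>t. w0"]) auto
  next
    case several: True
    have "\<forall>i\<in>I. w0 i \<noteq> 0" using less.prems(3,4) by force
    then obtain i where i: "i \<in> I" "(\<Sum>j\<in>I-{i}. w0 j) \<noteq> 0"
      using exists_proper_subsum_nonzero[OF less.prems(1) several] by blast
    define J where "J = I - {i}"
    have card_J: "card J = card I - 1" unfolding J_def using i(1) less.prems(1) by simp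
    have "card J \<noteq> 0" using card_J several by linarith
    then have "J \<noteq> {}" by auto
    then have J: "finite J" "J \<noteq> {}" "card J < card I" "i \<notin> J" "I = insert i J" "\<forall>j\<in>J. l j > 0"
      using i(1) less.prems(1,3) several card_J by (auto simp: J_def)
    have sum_I: "(\<Sum>j\<in>I. W j) = W i + (\<Sum>j\<in>J. W j)" for W :: "nat \<Rightarrow> complex"
      using J(1,4,5) by simp
    have li: "l i > 0" "cmod (w0 i) = l i" using less.prems(3,4) i(1) by auto
    have "\<forall>j\<in>J. cmod (w0 j) = l j" using less.prems(4) J(5) by blast
    moreover have "\<forall>t\<in>S. reach_min l (insert i J) \<le> a t \<and> a t \<le> reach_max l (insert i J)"
      using less.prems(7) unfolding J(5)[symmetric] .
    moreover have a0: "a t0 = cmod (w0 i + (\<Sum>j\<in>J. w0 j))" using less.prems(8) sum_I by simp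
    moreover have "(\<Sum>j\<in>J. w0 j) \<noteq> 0" using i(2) unfolding J_def .
    ultimately obtain b where b: "continuous_on S b" "b t0 = cmod (\<Sum>j\<in>J. w0 j)"
      "\<forall>t\<in>S. 0 < b t \<and> reach_min l J \<le> b t \<and> b t \<le> reach_max l J
         \<and> \<bar>b t - l i\<bar> \<le> a t \<and> a t \<le> b t + l i"
      using sub_chain_target[OF J(1,2,6,4) li(1) less.prems(5,6) _ li(2)] by blast
    obtain W' where W': "\<forall>j\<in>J. continuous_on S (\<lambda>t. W' t j)"
      "\<forall>t\<in>S. \<forall>j\<in>J. cmod (W' t j) = l j"
      "\<forall>j\<in>J. W' t0 j = w0 j" "\<forall>t\<in>S. cmod (\<Sum>j\<in>J. W' t j) = b t"
      using less.hyps[OF J(3) J(1,2,6) _ b(1) less.prems(6)] b(2,3) less.prems(4) J(5) by blast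
    define B where "B t = (\<Sum>j\<in>J. W' t j)" for t
    have B_cont: "continuous_on S B" unfolding B_def using W'(1) by (intro continuous_intros) auto
    have B_triangle: "\<forall>t\<in>S. 0 < cmod (B t) \<and> \<bar>cmod (B t) - l i\<bar> \<le> a t \<and> a t \<le> cmod (B t) + l i"
      using W'(4) b(3) unfolding B_def by auto
    have B_init: "cmod (w0 i + B t0) = a t0" unfolding B_def a0 using W'(3) by simp
    obtain u where u: "continuous_on S u" "\<forall>t\<in>S. cmod (u t) = l i \<and> cmod (u t + B t) = a t"
      "u t0 = w0 i"
      by (rule elbow_lift[OF B_cont less.prems(5) li(1) B_triangle less.prems(6) li(2) B_init])
    define W where "W t = (W' t)(i := u t)" for t
    have "(\<Sum>j\<in>J. W t j) = B t" for t unfolding W_def B_def using J(4) by (intro sum.cong) auto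
    then have "\<forall>t\<in>S. cmod (\<Sum>j\<in>I. W t j) = a t" using u(2) sum_I unfolding W_def
      by (simp add: add.commute)
    moreover have "continuous_on S (\<lambda>t. W t j)" if "j \<in> I" for j
      using W'(1) u(1) that J(5) unfolding W_def by (cases "j = i") auto
    moreover have "\<forall>t\<in>S. \<forall>j\<in>I. cmod (W t j) = l j"
      using W'(2) u(2) J(5) unfolding W_def by auto
    moreover have "\<forall>j\<in>I. W t0 j = w0 j"
      using W'(3) u(3) J(5) unfolding W_def by auto
    ultimately show ?thesis by blast
  qed
qed

lemma theta_conf_orbit: "theta k (conf_orbit k c) = cmod (\<Sum>i\<in>{1..k}. c (Suc i) - c i)"
proof -
  have "(\<lambda>z. 1 * z + 0) \<in> orient_isometries" unfolding orient_isometries_def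
    by (rule CollectI, rule exI[of _ 1], rule exI[of _ 0]) simp
  then have "\<exists>q. q \<in> conf_orbit k c" unfolding conf_orbit_def by blast
  then have "(SOME q. q \<in> conf_orbit k c) \<in> conf_orbit k c" by (rule someI_ex)
  then obtain u b where ub: "cmod u = 1"
    "(SOME q. q \<in> conf_orbit k c) = restrict ((\<lambda>z. u * z + b) \<circ> c) {1..Suc k}"
    unfolding conf_orbit_def orient_isometries_def by blast
  have "theta k (conf_orbit k c) = cmod (u * (c 1 - c (Suc k)))"
    unfolding theta_def Let_def ub(2) by (simp add: algebra_simps)
  also have "\<dots> = cmod (c (Suc k) - c 1)" using ub(1) by (simp add: norm_mult norm_minus_commute)
  also have "c (Suc k) - c 1 = (\<Sum>i\<in>{1..<Suc k}. c (Suc i) - c i)" by (simp add: sum_Suc_diff')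
  finally show ?thesis by (simp add: atLeastLessThanSuc_atLeastAtMost)
qed

definition chain_conf :: "nat \<Rightarrow> complex \<Rightarrow> (nat \<Rightarrow> complex) \<Rightarrow> nat \<Rightarrow> complex" where
  "chain_conf k z W = restrict (\<lambda>j. z + (\<Sum>i\<in>{1..<j}. W i)) {1..Suc k}"

lemma chain_conf_edge:
  assumes "i \<in> {1..k}"
  shows "chain_conf k z W (Suc i) - chain_conf k z W i = W i"
  using assms by (simp add: chain_conf_def sum.atLeastLessThan_Suc)

lemma chain_conf_in_path_conf:
  assumes "\<forall>i\<in>{1..k}. cmod (W i) = l i"
  shows "chain_conf k z W \<in> path_conf k l"
  using assms chain_conf_edge[of _ k z W] unfolding path_conf_def by (simp add: chain_conf_def)

lemma chain_conf_of_edges: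
  assumes "c \<in> path_conf k l" "\<forall>i\<in>{1..k}. W i = c (Suc i) - c i"
  shows "chain_conf k (c 1) W = c"
proof
  fix j show "chain_conf k (c 1) W j = c j"
  proof (cases "j \<in> {1..Suc k}")
    case True
    then have "(\<Sum>i\<in>{1..<j}. W i) = (\<Sum>i\<in>{1..<j}. c (Suc i) - c i)"
      using assms(2) by (intro sum.cong) auto
    also have "\<dots> = c j - c 1" using True by (intro sum_Suc_diff') auto
    finally show ?thesis using True by (simp add: chain_conf_def)
  next
    case False
    then show ?thesis using assms(1) by (auto simp: chain_conf_def path_conf_def PiE_def extensional_def)
  qed
qed

lemma continuous_chain_conf:
  assumes "\<forall>i\<in>{1..k}. continuous_on S (\<lambda>t. W t i)" "\<forall>t\<in>S. \<forall>i\<in>{1..k}. cmod (W t i) = l i"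
  shows "continuous_map (top_of_set S) (path_conf_top k l) (\<lambda>t. chain_conf k z (W t))"
  unfolding path_conf_top_def continuous_map_in_subtopology continuous_map_componentwise
proof (intro conjI ballI)
  fix j assume j: "j \<in> {1..Suc k}"
  have "continuous_on S (\<lambda>t. z + (\<Sum>i\<in>{1..<j}. W t i))"
    using assms(1) j by (intro continuous_intros) auto
  then show "continuous_map (top_of_set S) euclidean (\<lambda>t. chain_conf k z (W t) j)"
    using j by (simp add: chain_conf_def)
qed (use assms(2) chain_conf_in_path_conf in \<open>auto simp: chain_conf_def\<close>)

lemma continuous_map_quot_topology: "continuous_map X (quot_topology X f) f"
  unfolding continuous_map topspace_quot_topology openin_quot_topology by blast

theorem mainTheorem9:
  fixes k :: nat and l :: "nat \<Rightarrow> real" and p :: "(nat \<Rightarrow> complex) set"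
    and \<alpha> :: "real \<Rightarrow> real"
  assumes "k \<ge> 2"
    and "\<forall>i\<in>{1..k}. l i > 0"
    and "p \<in> moduli k l"
    and "continuous_on {0..1} \<alpha>"
    and "\<alpha> ` {0..1} \<subseteq> theta k ` moduli k l"
    and "\<alpha> 0 = theta k p"
  shows "\<exists>\<beta>. continuous_map (top_of_set {0..1}) (moduli_top k l) \<beta> \<and> \<beta> 0 = p \<and>
           (\<forall>t\<in>{0..1}. theta k (\<beta> t) = \<alpha> t)"
proof -
  have edges: "\<forall>i\<in>{1..k}. cmod (c (Suc i) - c i) = l i" if "c \<in> path_conf k l" for c
    using that by (simp add: path_conf_def)
  have reach: "\<forall>t\<in>{0..1}. reach_min l {1..k} \<le> \<alpha> t \<and> \<alpha> t \<le> reach_max l {1..k}"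
    using assms(1,5) reach_bounds[OF _ _ edges] by (fastforce simp: moduli_def theta_conf_orbit)
  obtain q where q: "q \<in> path_conf k l" "p = conf_orbit k q" using assms(3) by (auto simp: moduli_def)
  have "{1..k} \<noteq> {}" "(0::real) \<in> {0..1}" using assms(1) by auto
  moreover have "\<alpha> 0 = cmod (\<Sum>i\<in>{1..k}. q (Suc i) - q i)"
    using assms(6) q(2) by (simp add: theta_conf_orbit)
  ultimately obtain W where W: "\<forall>i\<in>{1..k}. continuous_on {0..1} (\<lambda>t. W t i)"
    "\<forall>t\<in>{0..1}. \<forall>i\<in>{1..k}. cmod (W t i) = l i" "\<forall>i\<in>{1..k}. W 0 i = q (Suc i) - q i"
    "\<forall>t\<in>{0..1}. cmod (\<Sum>i\<in>{1..k}. W t i) = \<alpha> t"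
    using chain_lift[OF finite_atLeastAtMost _ assms(2) edges[OF q(1)] assms(4) _ reach] by blast
  define \<beta> where "\<beta> t = conf_orbit k (chain_conf k (q 1) (W t))" for t
  have "continuous_map (top_of_set {0..1}) (moduli_top k l) \<beta>"
    unfolding \<beta>_def moduli_top_def
    using continuous_map_compose[OF continuous_chain_conf[OF W(1,2)] continuous_map_quot_topology]
    by (simp add: o_def)
  moreover have "\<beta> 0 = p" unfolding \<beta>_def chain_conf_of_edges[OF q(1) W(3)] q(2) ..
  moreover have "theta k (\<beta> t) = \<alpha> t" if "t \<in> {0..1}" for t
    using W(4) that unfolding \<beta>_def theta_conf_orbit by (simp add: chain_conf_edge)
  ultimately show ?thesis by blast
qed

end
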